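(* Let $T$ be a finite set of types and $n$ a positive integer. Suppose there exist $(\hat\lambda,\hat\mu)\in\mathcal{S}(\mathcal{G}_T^n)$ such that $\hat\lambda/(1-\hat\mu)=\gamma(\mathcal{G}_T^n)$. Then there exist $(c^1,f^1),(c^2,f^2)\in T$, $(x_1,y_1,z_1),(x_2,y_2,z_2)\in\mathcal{I}_{\mathcal{R}}$ and $\eta\in[0,1]$ such that for $j=1,2$ $$(z_j-x_j)f^j(x_j)+(y_j-z_j)f^j(x_j+1)+c^j(x_j)=\hat\lambda\,c^j(y_j)+\hat\mu\,c^j(x_j),$$ and $$\eta\big[z_1f^1(x_1)+(y_1-z_1)f^1(x_1+1)\big]+(1-\eta)\big[z_2f^2(x_2)+(y_2-z_2)f^2(x_2+1)\big]=\eta\,x_1f^1(x_1)+(1-\eta)\,x_2f^2(x_2).$$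
   Context: $T=\{(c_1,f_1),\dots,(c_m,f_m)\}$ is a finite set of types with $c_t,f_t:\{1,\dots,n\}\to\mathbb{R}$, extended by $c_t(0)=f_t(0)=f_t(n+1)=0$. With $\mathbb{N}=\{0,1,\dots\}$, $\mathcal{I}=\{(x,y,z)\in\mathbb{N}^3:1\le x+y-z\le n,\ z\le\min\{x,y\}\}$ and $\mathcal{I}_{\mathcal{R}}=\{(x,y,z)\in\mathcal{I}:x+y-z=n\text{ or }(x-z)(y-z)z=0\}$. $\mathcal{S}(\mathcal{G}_T^n)$ is the set of $(\lambda,\mu)$ with $\lambda>0$, $\mu<1$ such that for all $(c,f)\in T$ and all $(x,y,z)\in\mathcal{I}_{\mathcal{R}}$: $(z-x)f(x)+(y-z)f(x+1)+c(x)\le\lambda c(y)+\mu c(x)$. $\gamma(\mathcal{G}_T^n)=\inf\{\lambda/(1-\mu):(\lambda,\mu)\in\mathcal{S}(\mathcal{G}_T^n)\}$. *)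

theory Defs
  imports Complex_Main
begin

text \<open>A type is a pair (c, f) of functions nat => real; only the values on
  0..n (for c) and 0..n+1 (for f) matter, with the extension convention
  c 0 = f 0 = f (n+1) = 0 imposed as a hypothesis.\<close>

definition idx :: "nat \<Rightarrow> (nat \<times> nat \<times> nat) set" where
  "idx n = {(x, y, z). z \<le> x \<and> z \<le> y \<and> 1 \<le> x + y - z \<and> x + y - z \<le> n}"

definition idxR :: "nat \<Rightarrow> (nat \<times> nat \<times> nat) set" where
  "idxR n = {(x, y, z). (x, y, z) \<in> idx n \<and>
      (x + y - z = n \<or> (x - z) * (y - z) * z = 0)}"

definition Sset :: "((nat \<Rightarrow> real) \<times> (nat \<Rightarrow> real)) set \<Rightarrow> nat \<Rightarrow> (real \<times> real) set" where
  "Sset T n = {(lam, mu). lam > 0 \<and> mu < 1 \<and>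
      (\<forall>(c, f) \<in> T. \<forall>(x, y, z) \<in> idxR n.
         (real z - real x) * f x + (real y - real z) * f (x + 1) + c x
           \<le> lam * c y + mu * c x)}"

definition gamma :: "((nat \<Rightarrow> real) \<times> (nat \<Rightarrow> real)) set \<Rightarrow> nat \<Rightarrow> real" where
  "gamma T n = Inf {lam / (1 - mu) | lam mu. (lam, mu) \<in> Sset T n}"

end

theory Submission
  imports Defs
begin

text \<open>Optimality of the ratio \<open>\<lambda>/(1 - \<mu>)\<close> at \<open>(\<hat>\<lambda>, \<hat>\<mu>)\<close> is a statement about a
  finite system of linear constraints \<open>d\<^sub>k \<le> \<lambda> a\<^sub>k + \<mu> b\<^sub>k\<close>. Moving along the direction
  \<open>(\<sigma>\<hat>\<lambda>, -\<sigma>(1 - \<hat>\<mu>))\<close> leaves the ratio unchanged and changes the slack of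
  constraint \<open>k\<close> by \<open>\<sigma>(\<hat>\<lambda> a\<^sub>k - (1 - \<hat>\<mu>) b\<^sub>k)\<close> per unit step; lowering \<open>\<lambda>\<close> by a
  second-order term then strictly decreases the ratio. So at an optimum, for
  neither sign of \<open>\<sigma>\<close> can all tight constraints gain slack: there are tight
  constraints with \<open>\<hat>\<lambda> a - (1 - \<hat>\<mu>) b\<close> of either sign, and for a tight constraint
  this quantity is \<open>z f(x) + (y - z) f(x + 1) - x f(x)\<close>. A convex combination of
  the two values vanishes. Neither \<open>n \<ge> 1\<close> nor the boundary values of \<open>c, f\<close>
  are needed.\<close>

lemma eventually_at_right_0_quadratic_nonneg:
  fixes s p a :: real
  assumes "0 \<le> s" and "0 < s \<or> 0 < p"
  shows "\<forall>\<^sub>F t in at_right 0. 0 \<le> s + p * t - a * t\<^sup>2"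
proof (cases "0 < s")
  case True
  have "((\<lambda>t. s + p * t - a * t\<^sup>2) \<longlongrightarrow> s + p * 0 - a * 0\<^sup>2) (at_right 0)"
    by (intro tendsto_intros)
  then have "((\<lambda>t. s + p * t - a * t\<^sup>2) \<longlongrightarrow> s) (at_right 0)"
    by simp
  from order_tendstoD(1)[OF this True] show ?thesis
    by (rule eventually_mono) simp
next
  case False
  with assms have "s = 0" and "0 < p" by auto
  have "((\<lambda>t. p - a * t) \<longlongrightarrow> p - a * 0) (at_right 0)"
    by (intro tendsto_intros)
  then have "((\<lambda>t. p - a * t) \<longlongrightarrow> p) (at_right 0)"
    by simp
  from order_tendstoD(1)[OF this \<open>0 < p\<close>]
  have "\<forall>\<^sub>F t in at_right 0. 0 < p - a * t" .
  moreover have "\<forall>\<^sub>F t in at_right 0. (0::real) < t"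
    by (rule eventually_at_right_less)
  ultimately show ?thesis
  proof eventually_elim
    case (elim t)
    then have "0 \<le> t * (p - a * t)" by simp
    with \<open>s = 0\<close> show ?case by (simp add: algebra_simps power2_eq_square)
  qed
qed

definition feasible_pairs ::
    "'k set \<Rightarrow> ('k \<Rightarrow> real) \<Rightarrow> ('k \<Rightarrow> real) \<Rightarrow> ('k \<Rightarrow> real) \<Rightarrow> (real \<times> real) set" where
  "feasible_pairs K a b d = {(l, m). l > 0 \<and> m < 1 \<and> (\<forall>k\<in>K. d k \<le> l * a k + m * b k)}"

lemma feasible_pairs_ratio_improvable:
  fixes \<sigma> lh mh :: real
  assumes "finite K" and feasible: "(lh, mh) \<in> feasible_pairs K a b d"
    and tight: "\<And>k. k \<in> K \<Longrightarrow> d k = lh * a k + mh * b k \<Longrightarrow>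
      0 < \<sigma> * (lh * a k - (1 - mh) * b k)"
  shows "\<exists>(l, m) \<in> feasible_pairs K a b d. l / (1 - m) < lh / (1 - mh)"
proof -
  define s where "s k = lh * a k + mh * b k - d k" for k
  define e where "e k = lh * a k - (1 - mh) * b k" for k
  have "lh > 0" and "mh < 1" and slack: "\<And>k. k \<in> K \<Longrightarrow> 0 \<le> s k"
    using feasible by (auto simp: feasible_pairs_def s_def)
  have "\<forall>\<^sub>F t in at_right 0. \<forall>k\<in>K. 0 \<le> s k + (\<sigma> * e k) * t - a k * t\<^sup>2"
  proof (rule eventually_ball_finite[OF \<open>finite K\<close>], intro ballI)
    fix k assume "k \<in> K"
    then show "\<forall>\<^sub>F t in at_right 0. 0 \<le> s k + (\<sigma> * e k) * t - a k * t\<^sup>2"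
      using slack tight
      by (intro eventually_at_right_0_quadratic_nonneg) (force simp: s_def e_def)+
  qed
  moreover have "((\<lambda>t. lh * (1 + \<sigma> * t) - t\<^sup>2) \<longlongrightarrow> lh * (1 + \<sigma> * 0) - 0\<^sup>2) (at_right 0)"
    by (intro tendsto_intros)
  with \<open>lh > 0\<close> have "\<forall>\<^sub>F t in at_right 0. 0 < lh * (1 + \<sigma> * t) - t\<^sup>2"
    by (auto dest: order_tendstoD(1))
  moreover have "((\<lambda>t. 1 + \<sigma> * t) \<longlongrightarrow> 1 + \<sigma> * 0) (at_right 0)"
    by (intro tendsto_intros)
  from order_tendstoD(1)[OF this, of 0] have "\<forall>\<^sub>F t in at_right 0. 0 < 1 + \<sigma> * t"
    by simp
  moreover have "\<forall>\<^sub>F t in at_right 0. (0::real) < t"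
    by (rule eventually_at_right_less)
  ultimately have "\<forall>\<^sub>F t in at_right 0. (\<forall>k\<in>K. 0 \<le> s k + (\<sigma> * e k) * t - a k * t\<^sup>2)
      \<and> 0 < lh * (1 + \<sigma> * t) - t\<^sup>2 \<and> 0 < 1 + \<sigma> * t \<and> 0 < t"
    by eventually_elim blast
  then obtain t where t_slack: "\<forall>k\<in>K. 0 \<le> s k + (\<sigma> * e k) * t - a k * t\<^sup>2"
    and "0 < lh * (1 + \<sigma> * t) - t\<^sup>2" and "0 < 1 + \<sigma> * t" and "0 < t"
    using eventually_happens'[OF trivial_limit_at_right_real] by blast
  define l where "l = lh * (1 + \<sigma> * t) - t\<^sup>2"
  define m where "m = mh - \<sigma> * t * (1 - mh)"
  have one_minus_m: "1 - m = (1 - mh) * (1 + \<sigma> * t)"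
    unfolding m_def by (simp add: algebra_simps)
  have denom_pos: "0 < (1 - mh) * (1 + \<sigma> * t)"
    using \<open>mh < 1\<close> \<open>0 < 1 + \<sigma> * t\<close> by simp
  have "d k \<le> l * a k + m * b k" if "k \<in> K" for k
  proof -
    have "s k + (\<sigma> * e k) * t - a k * t\<^sup>2 = l * a k + m * b k - d k"
      unfolding s_def e_def l_def m_def by (simp add: algebra_simps)
    with t_slack \<open>k \<in> K\<close> show ?thesis by fastforce
  qed
  moreover have "0 < l" and "m < 1"
    using \<open>0 < lh * (1 + \<sigma> * t) - t\<^sup>2\<close> one_minus_m denom_pos by (simp_all add: l_def)
  ultimately have "(l, m) \<in> feasible_pairs K a b d"
    by (simp add: feasible_pairs_def)
  moreover have "l / (1 - m) < lh / (1 - mh)"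
  proof -
    have "l / (1 - m) = (lh * (1 + \<sigma> * t) - t\<^sup>2) / ((1 - mh) * (1 + \<sigma> * t))"
      by (simp add: l_def one_minus_m)
    also have "\<dots> < lh * (1 + \<sigma> * t) / ((1 - mh) * (1 + \<sigma> * t))"
      using denom_pos \<open>0 < t\<close> by (intro divide_strict_right_mono) auto
    also have "\<dots> = lh / (1 - mh)"
      using \<open>0 < 1 + \<sigma> * t\<close> by simp
    finally show ?thesis .
  qed
  ultimately show ?thesis by blast
qed

lemma optimal_feasible_pair_tight_constraints:
  assumes "finite K" and feasible: "(lh, mh) \<in> feasible_pairs K a b d"
    and optimal: "\<And>l m. (l, m) \<in> feasible_pairs K a b d \<Longrightarrow> lh / (1 - mh) \<le> l / (1 - m)"
  shows "\<exists>k1\<in>K. \<exists>k2\<in>K.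
    d k1 = lh * a k1 + mh * b k1 \<and> d k2 = lh * a k2 + mh * b k2 \<and>
    0 \<le> lh * a k1 - (1 - mh) * b k1 \<and> lh * a k2 - (1 - mh) * b k2 \<le> 0"
proof (rule ccontr)
  assume no_pair: "\<not> ?thesis"
  obtain \<sigma> :: real where "\<And>k. k \<in> K \<Longrightarrow> d k = lh * a k + mh * b k \<Longrightarrow>
      0 < \<sigma> * (lh * a k - (1 - mh) * b k)"
  proof (cases "\<forall>k\<in>K. d k = lh * a k + mh * b k \<longrightarrow> 0 < lh * a k - (1 - mh) * b k")
    case True
    then show ?thesis using that[of 1] by auto
  next
    case False
    with no_pair have "\<forall>k\<in>K. d k = lh * a k + mh * b k \<longrightarrow> lh * a k - (1 - mh) * b k < 0"
      by force
    then show ?thesis using that[of "-1"] by auto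
  qed
  from feasible_pairs_ratio_improvable[OF \<open>finite K\<close> feasible this] optimal
  show False by fastforce
qed

lemma convex_combination_eq_0:
  fixes u v :: real
  assumes "0 \<le> u" and "v \<le> 0"
  shows "\<exists>\<eta>. 0 \<le> \<eta> \<and> \<eta> \<le> 1 \<and> \<eta> * u + (1 - \<eta>) * v = 0"
proof (cases "u = v")
  case True
  with assms show ?thesis by (intro exI[of _ 1]) simp
next
  case False
  with assms have "0 < u - v" by simp
  with assms show ?thesis
    by (intro exI[of _ "- v / (u - v)"]) (auto simp: field_simps)
qed

lemma finite_idxR: "finite (idxR n)"
proof (rule finite_subset)
  show "idxR n \<subseteq> {..n} \<times> {..n} \<times> {..n}"
    by (auto simp: idxR_def idx_def)
qed simp

type_synonym constraint = "((nat \<Rightarrow> real) \<times> (nat \<Rightarrow> real)) \<times> nat \<times> nat \<times> nat"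

lemma Sset_eq_feasible_pairs:
  "Sset T n = feasible_pairs (T \<times> idxR n)
     (\<lambda>((c, f), (x, y, z)). c y) (\<lambda>((c, f), (x, y, z)). c x)
     (\<lambda>((c, f), (x, y, z)). (real z - real x) * f x + (real y - real z) * f (x + 1) + c x)"
  by (auto simp: Sset_def feasible_pairs_def)

lemma gamma_le:
  assumes "(l, m) \<in> Sset T n"
  shows "gamma T n \<le> l / (1 - m)"
  unfolding gamma_def
proof (rule cInf_lower)
  show "bdd_below {lam / (1 - mu) | lam mu. (lam, mu) \<in> Sset T n}"
    by (rule bdd_belowI[of _ 0]) (auto simp: Sset_def)
qed (use assms in blast)

lemma optimal_Sset_tight_pair:
  assumes "finite T" and "(lh, mh) \<in> Sset T n" and "lh / (1 - mh) = gamma T n"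
  obtains c1 f1 x1 y1 z1 c2 f2 x2 y2 z2 where
    "(c1, f1) \<in> T" "(x1, y1, z1) \<in> idxR n" "(c2, f2) \<in> T" "(x2, y2, z2) \<in> idxR n"
    "(real z1 - real x1) * f1 x1 + (real y1 - real z1) * f1 (x1 + 1) + c1 x1
      = lh * c1 y1 + mh * c1 x1"
    "(real z2 - real x2) * f2 x2 + (real y2 - real z2) * f2 (x2 + 1) + c2 x2
      = lh * c2 y2 + mh * c2 x2"
    "0 \<le> (real z1 - real x1) * f1 x1 + (real y1 - real z1) * f1 (x1 + 1)"
    "(real z2 - real x2) * f2 x2 + (real y2 - real z2) * f2 (x2 + 1) \<le> 0"
proof -
  define A :: "constraint \<Rightarrow> real" where "A = (\<lambda>((c, f), (x, y, z)). c y)"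
  define B :: "constraint \<Rightarrow> real" where "B = (\<lambda>((c, f), (x, y, z)). c x)"
  define D :: "constraint \<Rightarrow> real" where
    "D = (\<lambda>((c, f), (x, y, z)). (real z - real x) * f x + (real y - real z) * f (x + 1) + c x)"
  have S: "Sset T n = feasible_pairs (T \<times> idxR n) A B D"
    unfolding A_def B_def D_def by (rule Sset_eq_feasible_pairs)
  have optimal: "lh / (1 - mh) \<le> l / (1 - m)" if "(l, m) \<in> feasible_pairs (T \<times> idxR n) A B D"
    for l m
    using gamma_le[of l m T n] that assms(3) S by simp
  have "finite (T \<times> idxR n)"
    using \<open>finite T\<close> finite_idxR by simp
  from optimal_feasible_pair_tight_constraints[OF this assms(2)[unfolded S] optimal]
  obtain k1 k2 where "k1 \<in> T \<times> idxR n" "k2 \<in> T \<times> idxR n"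
    "D k1 = lh * A k1 + mh * B k1" "D k2 = lh * A k2 + mh * B k2"
    "0 \<le> lh * A k1 - (1 - mh) * B k1" "lh * A k2 - (1 - mh) * B k2 \<le> 0"
    by blast
  moreover obtain c1 f1 x1 y1 z1 where "k1 = ((c1, f1), (x1, y1, z1))"
    by (metis prod.collapse)
  moreover obtain c2 f2 x2 y2 z2 where "k2 = ((c2, f2), (x2, y2, z2))"
    by (metis prod.collapse)
  ultimately show thesis
    by (intro that[of c1 f1 x1 y1 z1 c2 f2 x2 y2 z2])
      (simp_all add: A_def B_def D_def algebra_simps)
qed

theorem lemma3:
  fixes T :: "((nat \<Rightarrow> real) \<times> (nat \<Rightarrow> real)) set" and n :: nat
    and lh mh :: real
  assumes "finite T" and "n \<ge> 1"
    and "\<forall>(c, f) \<in> T. c 0 = 0 \<and> f 0 = 0 \<and> f (n + 1) = 0"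
    and "(lh, mh) \<in> Sset T n"
    and "lh / (1 - mh) = gamma T n"
  shows "\<exists>c1 f1 c2 f2 x1 y1 z1 x2 y2 z2 (eta::real).
    (c1, f1) \<in> T \<and> (c2, f2) \<in> T \<and>
    (x1, y1, z1) \<in> idxR n \<and> (x2, y2, z2) \<in> idxR n \<and>
    0 \<le> eta \<and> eta \<le> 1 \<and>
    (real z1 - real x1) * f1 x1 + (real y1 - real z1) * f1 (x1 + 1) + c1 x1
      = lh * c1 y1 + mh * c1 x1 \<and>
    (real z2 - real x2) * f2 x2 + (real y2 - real z2) * f2 (x2 + 1) + c2 x2
      = lh * c2 y2 + mh * c2 x2 \<and>
    eta * (real z1 * f1 x1 + (real y1 - real z1) * f1 (x1 + 1))
      + (1 - eta) * (real z2 * f2 x2 + (real y2 - real z2) * f2 (x2 + 1))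
      = eta * (real x1 * f1 x1) + (1 - eta) * (real x2 * f2 x2)"
proof -
  obtain c1 f1 x1 y1 z1 c2 f2 x2 y2 z2 where
    mem: "(c1, f1) \<in> T" "(x1, y1, z1) \<in> idxR n" "(c2, f2) \<in> T" "(x2, y2, z2) \<in> idxR n" and
    tight: "(real z1 - real x1) * f1 x1 + (real y1 - real z1) * f1 (x1 + 1) + c1 x1
        = lh * c1 y1 + mh * c1 x1"
      "(real z2 - real x2) * f2 x2 + (real y2 - real z2) * f2 (x2 + 1) + c2 x2
        = lh * c2 y2 + mh * c2 x2" and
    signs: "0 \<le> (real z1 - real x1) * f1 x1 + (real y1 - real z1) * f1 (x1 + 1)"
      "(real z2 - real x2) * f2 x2 + (real y2 - real z2) * f2 (x2 + 1) \<le> 0"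
    using optimal_Sset_tight_pair[OF \<open>finite T\<close> assms(4,5)] .
  from convex_combination_eq_0[OF signs] obtain eta :: real where "0 \<le> eta" "eta \<le> 1" and
    "eta * ((real z1 - real x1) * f1 x1 + (real y1 - real z1) * f1 (x1 + 1))
      + (1 - eta) * ((real z2 - real x2) * f2 x2 + (real y2 - real z2) * f2 (x2 + 1)) = 0"
    by blast
  then have "eta * (real z1 * f1 x1 + (real y1 - real z1) * f1 (x1 + 1))
      + (1 - eta) * (real z2 * f2 x2 + (real y2 - real z2) * f2 (x2 + 1))
      = eta * (real x1 * f1 x1) + (1 - eta) * (real x2 * f2 x2)"
    by (simp add: algebra_simps)
  with mem tight \<open>0 \<le> eta\<close> \<open>eta \<le> 1\<close> show ?thesis
    by blast
qed

end
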